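(* Let $F=\begin{pmatrix}1&0&-1\\0&0&0\\-1&0&1\end{pmatrix}$ (edge detect A filter). Then for all $m,n\in\mathbb{N}$, it is not the case that the equation $F*X=B$ with the periodic boundary condition, for unknown $X\in\mathbb{R}^{m\times n}$, has a unique solution for every $B\in\mathbb{R}^{m\times n}$.
   Context: For $F=[f_{ij}]\in\mathbb{R}^{3\times3}$ and $X=[x_{ij}]\in\mathbb{R}^{m\times n}$, the convolution $F*X\in\mathbb{R}^{m\times n}$ is defined by $[F*X]_{ij}=\sum_{l_1=1}^3\sum_{l_2=1}^3 f_{l_1l_2}\,x_{i-l_1+2,\,j-l_2+2}$ for $1\le i\le m$, $1\le j\le n$, where the periodic boundary condition sets $x_{0j}=x_{mj}$, $x_{m+1,j}=x_{1j}$, $x_{i0}=x_{in}$, $x_{i,n+1}=x_{i1}$ (for all indices $i\in\{0,\dots,m+1\}$, $j\in\{0,\dots,n+1\}$, so corners are also determined, e.g. $x_{00}=x_{mn}$). *)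

theory Defs
  imports Complex_Main
begin

text \<open>An m x n real matrix is represented as a function nat => nat => real whose
  entries are indexed by 1..m and 1..n (1-based, as in the paper) and which is zero
  outside that range, so that function equality is matrix equality.\<close>

definition mats :: "nat \<Rightarrow> nat \<Rightarrow> (nat \<Rightarrow> nat \<Rightarrow> real) set" where
  "mats m n = {X. \<forall>i j. (i \<notin> {1..m} \<or> j \<notin> {1..n}) \<longrightarrow> X i j = 0}"

text \<open>Periodic extension: the entry x_{ij} for arbitrary integer indices i, j,
  with x_{0j} = x_{mj}, x_{m+1,j} = x_{1j}, etc.\<close>

definition pext :: "nat \<Rightarrow> nat \<Rightarrow> (nat \<Rightarrow> nat \<Rightarrow> real) \<Rightarrow> int \<Rightarrow> int \<Rightarrow> real" where
  "pext m n X i j = X (nat ((i - 1) mod int m + 1)) (nat ((j - 1) mod int n + 1))"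

definition conv :: "(nat \<Rightarrow> nat \<Rightarrow> real) \<Rightarrow> nat \<Rightarrow> nat \<Rightarrow> (nat \<Rightarrow> nat \<Rightarrow> real)
                    \<Rightarrow> nat \<Rightarrow> nat \<Rightarrow> real" where
  "conv F m n X i j =
     (\<Sum>l1\<in>{1..3::nat}. \<Sum>l2\<in>{1..3::nat}.
        F l1 l2 * pext m n X (int i - int l1 + 2) (int j - int l2 + 2))"

definition edgeA :: "nat \<Rightarrow> nat \<Rightarrow> real" where
  "edgeA i j = [[1, 0, -1], [0, 0, 0], [-1, 0, 1]] ! (i - 1) ! (j - 1)"

end

theory Submission
  imports Defs
begin

text \<open>The entries of the edge detect A filter sum to zero, so under the periodic
  boundary condition the filter annihilates every constant matrix. Hence the zero
  matrix and the all-ones matrix both solve F * X = 0, and solutions are not unique.\<close>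

definition const_mat :: "nat \<Rightarrow> nat \<Rightarrow> real \<Rightarrow> nat \<Rightarrow> nat \<Rightarrow> real" where
  "const_mat m n c = (\<lambda>i j. if i \<in> {1..m} \<and> j \<in> {1..n} then c else 0)"

lemma const_mat_in_mats: "const_mat m n c \<in> mats m n"
  unfolding mats_def const_mat_def by auto

lemma pext_const_mat:
  assumes "m \<ge> 1" "n \<ge> 1"
  shows "pext m n (const_mat m n c) a b = c"
proof -
  have "(a - 1) mod int m \<in> {0..<int m}" "(b - 1) mod int n \<in> {0..<int n}"
    using assms by auto
  then have "nat ((a - 1) mod int m + 1) \<in> {1..m}" "nat ((b - 1) mod int n + 1) \<in> {1..n}"
    by auto
  then show ?thesis
    unfolding pext_def const_mat_def by simp
qed

lemma conv_const_mat:
  assumes "m \<ge> 1" "n \<ge> 1"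
  shows "conv F m n (const_mat m n c) i j
           = c * (\<Sum>l1\<in>{1..3::nat}. \<Sum>l2\<in>{1..3::nat}. F l1 l2)"
  unfolding conv_def pext_const_mat[OF assms] by (simp add: sum_distrib_left mult.commute)

lemma zero_in_mats: "(\<lambda>_ _. 0) \<in> mats m n"
  unfolding mats_def by simp

lemma conv_zero: "conv F m n (\<lambda>_ _. 0) i j = 0"
  unfolding conv_def pext_def by simp

lemma edgeA_sum: "(\<Sum>l1\<in>{1..3::nat}. \<Sum>l2\<in>{1..3::nat}. edgeA l1 l2) = 0"
  by (simp add: edgeA_def numeral_3_eq_3 numeral_2_eq_2 atLeastAtMostSuc_conv)

lemma conv_not_uniquely_solvable_if_filter_sum_zero:
  assumes "m \<ge> 1" "n \<ge> 1"
    and sum_zero: "(\<Sum>l1\<in>{1..3::nat}. \<Sum>l2\<in>{1..3::nat}. F l1 l2) = 0"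
  shows "\<not> (\<exists>!X. X \<in> mats m n \<and>
              (\<forall>i \<in> {1..m}. \<forall>j \<in> {1..n}. conv F m n X i j = 0))"
proof
  assume unique: "\<exists>!X. X \<in> mats m n \<and> (\<forall>i \<in> {1..m}. \<forall>j \<in> {1..n}. conv F m n X i j = 0)"
  have "conv F m n (const_mat m n 1) i j = 0" for i j
    using conv_const_mat[OF assms(1,2)] sum_zero by simp
  with unique have "const_mat m n 1 = (\<lambda>_ _. 0)"
    using const_mat_in_mats zero_in_mats conv_zero by (metis (no_types, lifting))
  then have "const_mat m n 1 1 1 = 0"
    by simp
  with assms(1,2) show False
    unfolding const_mat_def by simp
qed

theorem corollary8:
  fixes m n :: nat
  assumes "m \<ge> 1" and "n \<ge> 1"
  shows "\<not> (\<forall>B \<in> mats m n. \<exists>!X. X \<in> mats m n \<and>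
              (\<forall>i \<in> {1..m}. \<forall>j \<in> {1..n}. conv edgeA m n X i j = B i j))"
proof
  assume "\<forall>B \<in> mats m n. \<exists>!X. X \<in> mats m n \<and>
            (\<forall>i \<in> {1..m}. \<forall>j \<in> {1..n}. conv edgeA m n X i j = B i j)"
  then have "\<exists>!X. X \<in> mats m n \<and>
               (\<forall>i \<in> {1..m}. \<forall>j \<in> {1..n}. conv edgeA m n X i j = 0)"
    using zero_in_mats by (rule bspec)
  then show False
    using conv_not_uniquely_solvable_if_filter_sum_zero[OF assms edgeA_sum] by blast
qed

end
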